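(* Consider the generalized Pólya–Young urn described in the context, with parameters $p\in\mathbb{N}$, $\sigma>0$, $\ell>0$, $w_0>0$, $b_0\ge0$. Then: (i) For all $N\ge0$ and $s\in\mathbb{N}_0$, \[ \mathbb{E}\big(\langle W_N/\sigma\rangle_s\big)=\langle w_0/\sigma\rangle_s\prod_{j=0}^{N-1}\frac{T_j+s\sigma}{T_j}. \] (ii) For all real $v$ with $|v-1|<1$, \[ \mathbb{E}\big(v^{W_N/\sigma}\big)=\sum_{s\ge0}\frac{(v-1)^s}{s!}\sum_{r=0}^{s}(-1)^{s-r}L_{s,r}\,\langle w_0/\sigma\rangle_r\prod_{j=0}^{N-1}\frac{T_j+r\sigma}{T_j}, \] where $L_{s,r}$ are the Lah numbers. (iii) Let $g_N=\prod_{j=0}^{N-1}\frac{T_j}{T_j+\sigma}$. Then $g_N\,N^{\Lambda}\to\kappa$ as $N\to\infty$, where \[ \kappa=p^{\Lambda}\prod_{r=0}^{p-1}\frac{\Gamma\!\left(\frac{r}{\psi}+\frac{w_0+b_0}{\sigma\psi}+\frac1\psi\right)}{\Gamma\!\left(\frac{r}{\psi}+\frac{w_0+b_0}{\sigma\psi}\right)}. \] (iv) $M_N:=g_NW_N$ is a non-negative martingale with respect to $(\mathcal{F}_N)$, it converges almost surely to a limit $M_\infty$, and $W_N/N^{\Lambda}\to M_\infty/\kappa$ almost surely.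
   Context: Generalized Pólya–Young urn: fix $p\in\mathbb{N}$, reals $\sigma>0$, $\ell>0$, and initial amounts $w_0>0$ (white) and $b_0\ge0$ (black); ball amounts are allowed to be real. Let $W_N,B_N$ be the white/black amounts after $N$ steps and $T_N=W_N+B_N$. At step $N\ge1$ a colour is drawn, white with conditional probability $W_{N-1}/T_{N-1}$, black otherwise. If $p\nmid N$, the drawn colour gains $\sigma$ (replacement matrix $\mathrm{diag}(\sigma,\sigma)$). If $p\mid N$, the replacement matrix is $\begin{pmatrix}\sigma&\ell\\0&\sigma+\ell\end{pmatrix}$: if white was drawn, white gains $\sigma$ and black gains $\ell$; if black was drawn, black gains $\sigma+\ell$. Hence for $N=np+k$ with $n\in\mathbb{N}_0$, $0\le k\le p-1$: $T_N=n(p\sigma+\ell)+k\sigma+w_0+b_0$ (deterministic). $\mathcal{F}_N$ is the $\sigma$-field generated by the first $N$ draws. Set $\psi=p+\ell/\sigma$ and $\Lambda=p/\psi=\frac{p}{p+\ell/\sigma}\in(0,1)$. Rising factorials: $\langle x\rangle_s=x(x+1)\cdots(x+s-1)$, $\langle x\rangle_0=1$. Lah numbers: $L_{0,0}=1$, $L_{s,0}=0$ for $s\ge1$, and $L_{s,r}=\binom{s}{r}\frac{(s-1)!}{(r-1)!}$ for $1\le r\le s$. *)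

theory Defs
  imports "HOL-Probability.Probability"
begin

text \<open>Amount of white after N steps; X n w = True iff white is drawn at step n (n >= 1).\<close>
primrec urnW :: "real \<Rightarrow> real \<Rightarrow> (nat \<Rightarrow> 'a \<Rightarrow> bool) \<Rightarrow> nat \<Rightarrow> 'a \<Rightarrow> real" where
  "urnW \<sigma> w0 X 0 \<omega> = w0"
| "urnW \<sigma> w0 X (Suc n) \<omega> = urnW \<sigma> w0 X n \<omega> + (if X (Suc n) \<omega> then \<sigma> else 0)"

primrec urnB :: "nat \<Rightarrow> real \<Rightarrow> real \<Rightarrow> real \<Rightarrow> (nat \<Rightarrow> 'a \<Rightarrow> bool) \<Rightarrow> nat \<Rightarrow> 'a \<Rightarrow> real" where
  "urnB p \<sigma> l b0 X 0 \<omega> = b0"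
| "urnB p \<sigma> l b0 X (Suc n) \<omega> = urnB p \<sigma> l b0 X n \<omega>
     + (if X (Suc n) \<omega> then 0 else \<sigma>) + (if p dvd Suc n then l else 0)"

definition urnT :: "nat \<Rightarrow> real \<Rightarrow> real \<Rightarrow> real \<Rightarrow> real \<Rightarrow> nat \<Rightarrow> real" where
  "urnT p \<sigma> l w0 b0 N =
     real (N div p) * (real p * \<sigma> + l) + real (N mod p) * \<sigma> + w0 + b0"

definition urnF :: "'a measure \<Rightarrow> (nat \<Rightarrow> 'a \<Rightarrow> bool) \<Rightarrow> nat \<Rightarrow> 'a measure" where
  "urnF M X N = sigma (space M) {{\<omega> \<in> space M. X i \<omega>} | i. 1 \<le> i \<and> i \<le> N}"

definition lah :: "nat \<Rightarrow> nat \<Rightarrow> real" where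
  "lah s r = (if s = 0 \<and> r = 0 then 1
              else if r = 0 \<or> s < r then 0
              else real (s choose r) * fact (s - 1) / fact (r - 1))"

definition urn_g :: "nat \<Rightarrow> real \<Rightarrow> real \<Rightarrow> real \<Rightarrow> real \<Rightarrow> nat \<Rightarrow> real" where
  "urn_g p \<sigma> l w0 b0 N =
     (\<Prod>j<N. urnT p \<sigma> l w0 b0 j / (urnT p \<sigma> l w0 b0 j + \<sigma>))"

definition urn_psi :: "nat \<Rightarrow> real \<Rightarrow> real \<Rightarrow> real" where
  "urn_psi p \<sigma> l = real p + l / \<sigma>"

definition urn_Lambda :: "nat \<Rightarrow> real \<Rightarrow> real \<Rightarrow> real" where
  "urn_Lambda p \<sigma> l = real p / urn_psi p \<sigma> l"

definition urn_kappa :: "nat \<Rightarrow> real \<Rightarrow> real \<Rightarrow> real \<Rightarrow> real \<Rightarrow> real" where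
  "urn_kappa p \<sigma> l w0 b0 =
     real p powr urn_Lambda p \<sigma> l *
     (\<Prod>r<p. Gamma (real r / urn_psi p \<sigma> l + (w0 + b0) / (\<sigma> * urn_psi p \<sigma> l) + 1 / urn_psi p \<sigma> l)
            / Gamma (real r / urn_psi p \<sigma> l + (w0 + b0) / (\<sigma> * urn_psi p \<sigma> l)))"

end

theory Submission
  imports Defs "HOL-Analysis.Generalised_Binomial_Theorem"
begin

text \<open>
  Conditionally on the first N draws, W increases by \<sigma> with probability W_N / T_N. Together with
  x ((x + 1)^(s) - x^(s)) = s x^(s) this multiplies the s-th rising factorial moment of W/\<sigma> by
  (T_N + s\<sigma>) / T_N at each step, which is (i); since W_N takes finitely many values, (ii) follows
  by averaging Newton's binomial series, the Lah numbers converting rising into falling factorials.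
  Over a block of p steps T is affine in the block index, so g along multiples of p is a product
  of p ratios of rising factorials whose growth is given by the Gamma function; monotonicity of
  g and of N powr \<Lambda> fills in the gaps, giving (iii).
  With s = 1, (i) makes M_N = g_N W_N a martingale, and with s = 2 it gives
  E (M_b - M_a)^2 \<le> \<sigma> w_0 g_a for a \<le> b. Along N = k^q with q \<Lambda> \<ge> 4 the L1 increments are
  therefore summable, so M converges a.s. along this subsequence; in between, M_N is squeezed by
  g decreasing and W increasing. Dividing by (iii) gives the behaviour of W_N / N powr \<Lambda>.
\<close>

section \<open>Rising factorials and Lah numbers\<close>

lemma lah_Suc_0: "lah (Suc s) 0 = 0"
  by (simp add: lah_def)

lemma lah_eq_0_if_less: "s < r \<Longrightarrow> lah s r = 0"
  by (simp add: lah_def)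

lemma lah_eq_fact:
  "1 \<le> r \<Longrightarrow> r \<le> s \<Longrightarrow> lah s r = fact s * fact (s - 1) / (fact r * fact (s - r) * fact (r - 1))"
  by (simp add: lah_def binomial_fact)

lemma lah_Suc_Suc: "lah (Suc s) (Suc r) = lah s r + real (s + Suc r) * lah s (Suc r)"
proof -
  consider "r = 0" | "0 < r" "r < s" | "0 < r" "s \<le> r" by linarith
  then show ?thesis
  proof cases
    case 1
    then show ?thesis
      by (cases s) (simp_all add: lah_def fact_reduce)
  next
    case 2
    then obtain b c where bc: "r = Suc b" "s = Suc (b + c + 1)"
      by (metis add.commute add_Suc_right less_iff_Suc_add not0_implies_Suc plus_1_eq_Suc)
    define x y :: real where "x = real b" and "y = real c"
    define A B C :: real where "A = fact (b + c + 1)" and "B = fact b" and "C = fact c"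
    define K where "K = A * A / (B * B * C)"
    have pos: "A > 0" "B > 0" "C > 0" "x + 1 > 0" "x + 2 > 0" "y + 1 > 0"
      by (simp_all add: A_def B_def C_def x_def y_def add_nonneg_pos)
    have facts: "fact (b + c + 2) = (x + y + 2) * A"
      "fact (b + c + 3) = (x + y + 3) * (x + y + 2) * A"
      "fact (b + 1) = (x + 1) * B" "fact (b + 2) = (x + 2) * (x + 1) * B"
      "fact (c + 1) = (y + 1) * C"
      by (simp_all add: x_def y_def A_def B_def C_def numeral_eq_Suc algebra_simps)
    have "lah (Suc s) (Suc r) = fact (b + c + 3) * fact (b + c + 2) / (fact (b + 2) * fact (c + 1) * fact (b + 1))"
      by (subst lah_eq_fact) (simp_all add: bc numeral_eq_Suc)
    also have "\<dots> = K * ((x + y + 3) * (x + y + 2) * (x + y + 2) / ((x + 2) * (x + 1) * (y + 1) * (x + 1)))"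
      unfolding facts K_def using pos by (simp add: field_simps)
    \<comment> \<open>after cancelling the factorials, the polynomial identity (s+1)s = (r+1)r + (s+r+1)(s-r)\<close>
    also have "(x + y + 3) * (x + y + 2) * (x + y + 2) / ((x + 2) * (x + 1) * (y + 1) * (x + 1))
        = (x + y + 2) / ((x + 1) * (y + 1)) + (2 * x + y + 4) * ((x + y + 2) / ((x + 2) * (x + 1) * (x + 1)))"
      using pos by (simp add: divide_simps) (simp add: algebra_simps)
    also have "K * ((x + y + 2) / ((x + 1) * (y + 1))
        + (2 * x + y + 4) * ((x + y + 2) / ((x + 2) * (x + 1) * (x + 1))))
        = lah s r + real (s + Suc r) * lah s (Suc r)"
    proof -
      have "lah s r = fact (b + c + 2) * A / (fact (b + 1) * fact (c + 1) * B)"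
        by (subst lah_eq_fact) (simp_all add: bc numeral_eq_Suc A_def B_def)
      moreover have "lah s (Suc r) = fact (b + c + 2) * A / (fact (b + 2) * C * fact (b + 1))"
        by (subst lah_eq_fact) (simp_all add: bc numeral_eq_Suc A_def C_def)
      moreover have "real (s + Suc r) = 2 * x + y + 4"
        by (simp add: bc x_def y_def)
      ultimately show ?thesis
        unfolding facts K_def distrib_left using pos by (simp add: field_simps)
    qed
    finally show ?thesis .
  next
    case 3
    then show ?thesis
      by (cases "r = s") (simp_all add: lah_def)
  qed
qed

lemma sum_lah_pochhammer_eq_prod:
  "(\<Sum>r\<le>s. (-1) ^ (s - r) * lah s r * pochhammer (y::real) r) = (\<Prod>i<s. y - real i)"
proof (induction s)
  case 0
  then show ?case by (simp add: lah_def)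
next
  case (Suc s)
  \<comment> \<open>multiplying by y - s uses y^(r) (y - s) = y^(r+1) - (r+s) y^(r), then the Lah recurrence\<close>
  have step: "(-1) ^ (s - r) * lah s r * pochhammer y r * (y - real s)
      = (-1) ^ (s - r) * lah s r * pochhammer y (Suc r)
        + (-1) ^ (Suc s - r) * (real (s + r) * lah s r) * pochhammer y r" if "r \<le> s" for r
  proof -
    have "(-1::real) ^ (Suc s - r) = - ((-1) ^ (s - r))"
      using that by (simp add: Suc_diff_le)
    then show ?thesis
      by (simp add: pochhammer_Suc algebra_simps)
  qed
  have shifted: "(\<Sum>r\<le>s. (-1) ^ (s - r) * (real (s + Suc r) * lah s (Suc r)) * pochhammer y (Suc r))
      = (\<Sum>r\<le>s. (-1) ^ (Suc s - r) * (real (s + r) * lah s r) * pochhammer y r)"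
  proof -
    have "(\<Sum>r\<le>Suc s. (-1) ^ (Suc s - r) * (real (s + r) * lah s r) * pochhammer y r)
      = (\<Sum>r\<le>s. (-1) ^ (Suc s - Suc r) * (real (s + Suc r) * lah s (Suc r)) * pochhammer y (Suc r))"
      by (subst sum.atMost_Suc_shift) (cases s; simp add: lah_def)
    then show ?thesis
      by (simp add: lah_eq_0_if_less)
  qed
  have "(\<Prod>i<Suc s. y - real i) = (\<Sum>r\<le>s. (-1) ^ (s - r) * lah s r * pochhammer y r) * (y - real s)"
    using Suc by simp
  also have "\<dots> = (\<Sum>r\<le>s. (-1) ^ (s - r) * lah s r * pochhammer y (Suc r))
      + (\<Sum>r\<le>s. (-1) ^ (Suc s - r) * (real (s + r) * lah s r) * pochhammer y r)"
    by (simp add: sum_distrib_right step sum.distrib[symmetric])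
  also have "\<dots> = (\<Sum>r\<le>s. (-1) ^ (s - r) * lah s r * pochhammer y (Suc r))
      + (\<Sum>r\<le>s. (-1) ^ (s - r) * (real (s + Suc r) * lah s (Suc r)) * pochhammer y (Suc r))"
    by (simp only: shifted)
  also have "\<dots> = (\<Sum>r\<le>s. (-1) ^ (Suc s - Suc r) * lah (Suc s) (Suc r) * pochhammer y (Suc r))"
    by (simp add: lah_Suc_Suc sum.distrib[symmetric] algebra_simps)
  also have "\<dots> = (\<Sum>r\<le>Suc s. (-1) ^ (Suc s - r) * lah (Suc s) r * pochhammer y r)"
    by (subst sum.atMost_Suc_shift) (simp add: lah_Suc_0)
  finally show ?case ..
qed

lemma sum_lah_pochhammer_eq_gbinomial:
  "(\<Sum>r\<le>s. (-1) ^ (s - r) * lah s r * pochhammer (y::real) r) = fact s * (y gchoose s)"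
  by (simp add: sum_lah_pochhammer_eq_prod gbinomial_prod_rev atLeast0LessThan)

lemma pochhammer_Suc_diff: "(x::real) * (pochhammer (x + 1) s - pochhammer x s) = real s * pochhammer x s"
proof (cases s)
  case (Suc n)
  then show ?thesis
    unfolding Suc pochhammer_rec[of x n] pochhammer_Suc[of "x + 1" n] by (simp add: algebra_simps)
qed simp

section \<open>Limits and summability\<close>

lemma pochhammer_ratio_tendsto_Gamma:
  fixes a d :: real
  assumes "a > 0" "d > 0"
  shows "(\<lambda>n. pochhammer a n / pochhammer (a + d) n * real n powr d) \<longlonglongrightarrow> Gamma (a + d) / Gamma a"
proof -
  have "(\<lambda>n. Gamma_series' (a + d) n / Gamma_series' a n) \<longlonglongrightarrow> Gamma (a + d) / Gamma a"
    using assms by (intro tendsto_divide Gamma_series'_LIMSEQ) (simp_all add: Gamma_real_pos_exp)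
  moreover have "eventually (\<lambda>n. Gamma_series' (a + d) n / Gamma_series' a n
      = pochhammer a n / pochhammer (a + d) n * real n powr d) sequentially"
    using eventually_gt_at_top[of 0]
  proof eventually_elim
    case (elim n)
    have "pochhammer a n > 0" "pochhammer (a + d) n > 0"
      using assms by (simp_all add: pochhammer_pos)
    moreover have "exp ((a + d) * ln (real n)) = exp (a * ln (real n)) * real n powr d"
      using elim by (simp add: powr_def exp_add[symmetric] algebra_simps)
    ultimately show ?case
      unfolding Gamma_series'_def by (simp add: field_simps)
  qed
  ultimately show ?thesis
    by (rule Lim_transform_eventually)
qed

lemma strict_mono_power: "q \<ge> 1 \<Longrightarrow> strict_mono (\<lambda>k::nat. k ^ q)"
  by (rule strict_monoI) (simp add: power_strict_mono)

lemma tendsto_sandwich_strict_mono: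
  fixes f lo hi :: "nat \<Rightarrow> real" and a :: "nat \<Rightarrow> nat"
  assumes a: "strict_mono a"
    and bounds: "\<And>k n. a k \<le> n \<Longrightarrow> n \<le> a (Suc k) \<Longrightarrow> lo k \<le> f n \<and> f n \<le> hi k"
    and "lo \<longlonglongrightarrow> L" "hi \<longlonglongrightarrow> L"
  shows "f \<longlonglongrightarrow> L"
proof -
  define idx where "idx n = (LEAST k. n < a (Suc k))" for n
  have "n < a (Suc n)" for n
    using seq_suble[OF a, of "Suc n"] by simp
  then have idx_upper: "n < a (Suc (idx n))" for n
    unfolding idx_def by (rule LeastI)
  have idx_lower: "a (idx n) \<le> n" if "a 0 \<le> n" for n
  proof (cases "idx n")
    case (Suc j)
    then have "\<not> n < a (Suc j)"
      using not_less_Least[of j "\<lambda>k. n < a (Suc k)"] unfolding idx_def by simp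
    then show ?thesis
      using Suc by simp
  qed (use that in simp)
  have "filterlim idx sequentially sequentially"
    unfolding filterlim_at_top eventually_sequentially
  proof (intro allI exI impI)
    fix k n
    assume "a k \<le> n"
    then have "a k < a (Suc (idx n))"
      using idx_upper[of n] by linarith
    then show "k \<le> idx n"
      using strict_mono_less[OF a] by simp
  qed
  then have lim: "(\<lambda>n. lo (idx n)) \<longlonglongrightarrow> L" "(\<lambda>n. hi (idx n)) \<longlonglongrightarrow> L"
    using assms(3,4) by (auto intro: filterlim_compose)
  have "lo (idx n) \<le> f n \<and> f n \<le> hi (idx n)" if "a 0 \<le> n" for n
    using bounds[OF idx_lower[OF that] less_imp_le[OF idx_upper]] .
  then have "eventually (\<lambda>n. lo (idx n) \<le> f n) sequentially"
    and "eventually (\<lambda>n. f n \<le> hi (idx n)) sequentially"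
    unfolding eventually_sequentially by blast+
  from tendsto_sandwich[OF this lim] show ?thesis .
qed

lemma tendsto_mult_decseq_incseq:
  fixes u v :: "nat \<Rightarrow> real" and a :: "nat \<Rightarrow> nat"
  assumes "strict_mono a" "decseq u" "incseq v" "\<And>n. 0 \<le> u n" "\<And>n. 0 \<le> v n"
    and "(\<lambda>k. u (a (Suc k)) * v (a k)) \<longlonglongrightarrow> L"
    and "(\<lambda>k. u (a k) * v (a (Suc k))) \<longlonglongrightarrow> L"
  shows "(\<lambda>n. u n * v n) \<longlonglongrightarrow> L"
proof (rule tendsto_sandwich_strict_mono[OF assms(1) _ assms(6,7)])
  fix k n
  assume "a k \<le> n" "n \<le> a (Suc k)"
  show "u (a (Suc k)) * v (a k) \<le> u n * v n \<and> u n * v n \<le> u (a k) * v (a (Suc k))"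
  proof
    show "u (a (Suc k)) * v (a k) \<le> u n * v n"
      using assms(2-5) \<open>a k \<le> n\<close> \<open>n \<le> a (Suc k)\<close>
      by (intro mult_mono) (auto dest: decseqD incseqD)
    show "u n * v n \<le> u (a k) * v (a (Suc k))"
      using assms(2-5) \<open>a k \<le> n\<close> \<open>n \<le> a (Suc k)\<close>
      by (intro mult_mono) (auto dest: decseqD incseqD)
  qed
qed

lemma convergent_if_summable_abs_diff:
  fixes u :: "nat \<Rightarrow> real"
  assumes "summable (\<lambda>k. \<bar>u (Suc k) - u k\<bar>)"
  shows "convergent u"
proof -
  have "convergent (\<lambda>n. \<Sum>k<n. u (Suc k) - u k)"
    using summable_rabs_cancel[OF assms] by (simp add: summable_iff_convergent)
  then show ?thesis
    by (simp add: sum_lessThan_telescope convergent_diff_const_right_iff)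
qed

lemma AE_summable_if_summable_integral:
  fixes f :: "nat \<Rightarrow> 'a \<Rightarrow> real"
  assumes "\<And>k. integrable M (f k)" "\<And>k x. 0 \<le> f k x"
    and "summable (\<lambda>k. \<integral>x. f k x \<partial>M)"
  shows "AE x in M. summable (\<lambda>k. f k x)"
proof -
  have [measurable]: "f k \<in> borel_measurable M" for k
    using assms(1) by blast
  have "(\<integral>\<^sup>+ x. (\<Sum>k. ennreal (f k x)) \<partial>M) = (\<Sum>k. \<integral>\<^sup>+ x. ennreal (f k x) \<partial>M)"
    by (rule nn_integral_suminf) measurable
  also have "\<dots> = ennreal (\<Sum>k. \<integral>x. f k x \<partial>M)"
    using assms by (simp add: nn_integral_eq_integral suminf_ennreal2 integral_nonneg_AE)
  finally have "(\<integral>\<^sup>+ x. (\<Sum>k. ennreal (f k x)) \<partial>M) \<noteq> \<infinity>"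
    by simp
  then have "AE x in M. (\<Sum>k. ennreal (f k x)) \<noteq> \<infinity>"
    by (intro nn_integral_noteq_infinite) measurable
  then show ?thesis
    by eventually_elim (use assms(2) in \<open>auto intro: summable_suminf_not_top\<close>)
qed

lemma (in prob_space) expectation_abs_le_sqrt:
  fixes Z :: "'a \<Rightarrow> real"
  assumes "integrable M Z" "integrable M (\<lambda>x. (Z x)\<^sup>2)"
  shows "expectation (\<lambda>x. \<bar>Z x\<bar>) \<le> sqrt (expectation (\<lambda>x. (Z x)\<^sup>2))"
proof -
  have "(expectation (\<lambda>x. \<bar>Z x\<bar>))\<^sup>2 \<le> expectation (\<lambda>x. (Z x)\<^sup>2)"
    using variance_positive[of "\<lambda>x. \<bar>Z x\<bar>"] variance_eq[of "\<lambda>x. \<bar>Z x\<bar>"] assms by simp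
  then show ?thesis
    using real_le_rsqrt by blast
qed

section \<open>The total mass and the normalising sequence g\<close>

locale urn_params =
  fixes p :: nat and \<sigma> l w0 b0 :: real
  assumes p_pos: "p \<ge> 1" and \<sigma>_pos: "\<sigma> > 0" and l_pos: "l > 0"
    and w0_pos: "w0 > 0" and b0_nonneg: "b0 \<ge> 0"
begin

abbreviation T where "T \<equiv> urnT p \<sigma> l w0 b0"
abbreviation g where "g \<equiv> urn_g p \<sigma> l w0 b0"
abbreviation \<psi> where "\<psi> \<equiv> urn_psi p \<sigma> l"
abbreviation \<Lambda> where "\<Lambda> \<equiv> urn_Lambda p \<sigma> l"
abbreviation \<kappa> where "\<kappa> \<equiv> urn_kappa p \<sigma> l w0 b0"

lemma T_pos: "T n > 0"
  unfolding urnT_def using \<sigma>_pos l_pos w0_pos b0_nonneg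
  by (intro add_pos_nonneg add_nonneg_pos add_nonneg_nonneg mult_nonneg_nonneg) auto

lemma \<psi>_pos: "\<psi> > 0"
  using p_pos \<sigma>_pos l_pos by (simp add: urn_psi_def add_pos_nonneg)

lemma \<Lambda>_pos: "\<Lambda> > 0"
  using p_pos \<psi>_pos by (simp add: urn_Lambda_def)

text \<open>The arguments of the Gamma function in the denominator of \<kappa>.\<close>
definition \<alpha> :: "nat \<Rightarrow> real" where
  "\<alpha> r = real r / \<psi> + (w0 + b0) / (\<sigma> * \<psi>)"

lemma \<alpha>_pos: "\<alpha> r > 0"
  using \<psi>_pos \<sigma>_pos w0_pos b0_nonneg by (simp add: \<alpha>_def add_nonneg_pos)

lemma T_block:
  assumes "r < p"
  shows "T (m * p + r) = \<sigma> * \<psi> * (real m + \<alpha> r)"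
proof -
  have "(m * p + r) div p = m" "(m * p + r) mod p = r"
    using assms by auto
  moreover have "\<sigma> * \<psi> = real p * \<sigma> + l"
    using \<sigma>_pos by (simp add: urn_psi_def field_simps)
  moreover have "\<sigma> * \<psi> * (real m + \<alpha> r) = real m * (\<sigma> * \<psi>) + real r * \<sigma> + (w0 + b0)"
    using \<sigma>_pos \<psi>_pos by (simp add: \<alpha>_def field_simps)
  ultimately show ?thesis
    by (simp add: urnT_def algebra_simps)
qed

lemma g_Suc: "g (Suc n) = g n * (T n / (T n + \<sigma>))"
  by (simp add: urn_g_def)

lemma g_pos: "g n > 0"
  unfolding urn_g_def using T_pos \<sigma>_pos by (intro prod_pos divide_pos_pos add_pos_pos) auto

lemma g_decseq: "decseq g"
proof (rule decseq_SucI)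
  fix n
  have "T n / (T n + \<sigma>) \<le> 1"
    using T_pos[of n] \<sigma>_pos by simp
  from mult_left_le[OF this less_imp_le[OF g_pos[of n]]]
  show "g (Suc n) \<le> g n"
    unfolding g_Suc .
qed

lemma g_mult_prod_inverse: "g N * (\<Prod>j<N. (T j + \<sigma>) / T j) = 1"
  unfolding urn_g_def prod.distrib[symmetric]
  using T_pos \<sigma>_pos by (intro prod.neutral) (auto simp: add_pos_pos less_imp_neq[symmetric])

lemma g_Suc_mult_inverse: "g (Suc n) * ((T n + \<sigma>) / T n) = g n"
  using T_pos[of n] \<sigma>_pos by (simp add: g_Suc add_pos_pos less_imp_neq[symmetric])

lemma g_mult_p: "g (n * p) = (\<Prod>r<p. pochhammer (\<alpha> r) n / pochhammer (\<alpha> r + 1 / \<psi>) n)"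
proof -
  have ratio: "T (m * p + r) / (T (m * p + r) + \<sigma>) = (real m + \<alpha> r) / (real m + \<alpha> r + 1 / \<psi>)"
    if "r < p" for m r
  proof -
    have "T (m * p + r) + \<sigma> = \<sigma> * \<psi> * (real m + \<alpha> r + 1 / \<psi>)"
      using T_block[OF that] \<psi>_pos by (simp add: field_simps)
    then show ?thesis
      using T_block[OF that] \<sigma>_pos \<psi>_pos by simp
  qed
  have "g (n * p) = (\<Prod>m<n. \<Prod>j\<in>{m * p..<m * p + p}. T j / (T j + \<sigma>))"
    unfolding urn_g_def by (rule prod.nat_group[symmetric])
  also have "\<dots> = (\<Prod>m<n. \<Prod>r<p. T (m * p + r) / (T (m * p + r) + \<sigma>))"
    using prod.shift_bounds_nat_ivl[of "\<lambda>j. T j / (T j + \<sigma>)" 0 "_ * p" p]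
    by (simp add: atLeast0LessThan add.commute)
  also have "\<dots> = (\<Prod>r<p. \<Prod>m<n. (real m + \<alpha> r) / (real m + \<alpha> r + 1 / \<psi>))"
    by (subst prod.swap) (simp add: ratio)
  also have "\<dots> = (\<Prod>r<p. pochhammer (\<alpha> r) n / pochhammer (\<alpha> r + 1 / \<psi>) n)"
    by (simp add: pochhammer_prod prod_dividef atLeast0LessThan add_ac)
  finally show ?thesis .
qed

lemma \<kappa>_eq: "\<kappa> = real p powr \<Lambda> * (\<Prod>r<p. Gamma (\<alpha> r + 1 / \<psi>) / Gamma (\<alpha> r))"
  by (simp add: urn_kappa_def \<alpha>_def add_ac)

lemma \<kappa>_pos: "\<kappa> > 0"
  unfolding \<kappa>_eq using p_pos \<alpha>_pos \<psi>_pos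
  by (intro mult_pos_pos prod_pos divide_pos_pos) (auto simp: Gamma_real_pos_exp add_pos_pos)

lemma g_mult_p_asymptotics: "(\<lambda>n. g (n * p) * real (n * p) powr \<Lambda>) \<longlonglongrightarrow> \<kappa>"
proof -
  have "(\<lambda>n. real p powr \<Lambda> * (\<Prod>r<p. pochhammer (\<alpha> r) n / pochhammer (\<alpha> r + 1 / \<psi>) n * real n powr (1 / \<psi>)))
      \<longlonglongrightarrow> \<kappa>"
    unfolding \<kappa>_eq using \<alpha>_pos \<psi>_pos
    by (intro tendsto_mult_left tendsto_prod pochhammer_ratio_tendsto_Gamma) simp_all
  moreover have "real p powr \<Lambda> * (\<Prod>r<p. pochhammer (\<alpha> r) n / pochhammer (\<alpha> r + 1 / \<psi>) n * real n powr (1 / \<psi>))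
      = g (n * p) * real (n * p) powr \<Lambda>" for n
  proof -
    have "(\<Prod>r<p. pochhammer (\<alpha> r) n / pochhammer (\<alpha> r + 1 / \<psi>) n * real n powr (1 / \<psi>))
        = g (n * p) * (real n powr (1 / \<psi>)) ^ p"
      by (simp only: prod.distrib g_mult_p prod_constant card_lessThan)
    moreover have "(real n powr (1 / \<psi>)) ^ p = real n powr \<Lambda>"
      using p_pos by (cases "n = 0") (simp_all add: urn_Lambda_def powr_realpow[symmetric] powr_powr)
    ultimately show ?thesis
      by (simp add: powr_mult)
  qed
  ultimately show ?thesis
    by simp
qed

lemma g_asymptotics: "(\<lambda>N. g N * real N powr \<Lambda>) \<longlonglongrightarrow> \<kappa>"
proof -
  define G where "G n = g (n * p) * real (n * p) powr \<Lambda>" for n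
  have G: "G \<longlonglongrightarrow> \<kappa>"
    unfolding G_def by (rule g_mult_p_asymptotics)
  have "(\<lambda>k. G (Suc k) * (real k / real (Suc k)) powr \<Lambda>) \<longlonglongrightarrow> \<kappa> * 1 powr \<Lambda>"
    by (intro tendsto_mult tendsto_powr LIMSEQ_n_over_Suc_n tendsto_const LIMSEQ_Suc[OF G]) simp
  moreover have "G (Suc k) * (real k / real (Suc k)) powr \<Lambda> = g (Suc k * p) * real (k * p) powr \<Lambda>" for k
  proof -
    have "real (k * p) = real (Suc k * p) * (real k / real (Suc k))"
      by (simp add: field_simps)
    also have "\<dots> powr \<Lambda> = real (Suc k * p) powr \<Lambda> * (real k / real (Suc k)) powr \<Lambda>"
      by (rule powr_mult; simp)
    finally show ?thesis
      by (simp add: G_def)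
  qed
  ultimately have lower: "(\<lambda>k. g (Suc k * p) * real (k * p) powr \<Lambda>) \<longlonglongrightarrow> \<kappa>"
    by simp
  have "(\<lambda>k. G k * (real (Suc k) / real k) powr \<Lambda>) \<longlonglongrightarrow> \<kappa> * 1 powr \<Lambda>"
    by (intro tendsto_mult tendsto_powr LIMSEQ_Suc_n_over_n tendsto_const G) simp
  then have "(\<lambda>k. G k * (real (Suc k) / real k) powr \<Lambda>) \<longlonglongrightarrow> \<kappa>"
    by simp
  moreover have "eventually (\<lambda>k. G k * (real (Suc k) / real k) powr \<Lambda>
      = g (k * p) * real (Suc k * p) powr \<Lambda>) sequentially"
    using eventually_gt_at_top[of 0]
  proof eventually_elim
    case (elim k)
    have "real (Suc k * p) = real (k * p) * (real (Suc k) / real k)"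
      using elim by (simp add: field_simps)
    also have "\<dots> powr \<Lambda> = real (k * p) powr \<Lambda> * (real (Suc k) / real k) powr \<Lambda>"
      by (rule powr_mult; simp)
    finally show ?case
      by (simp add: G_def)
  qed
  ultimately have upper: "(\<lambda>k. g (k * p) * real (Suc k * p) powr \<Lambda>) \<longlonglongrightarrow> \<kappa>"
    by (rule Lim_transform_eventually)
  have "strict_mono (\<lambda>k. k * p)"
    using p_pos by (intro strict_monoI) simp
  moreover have "incseq (\<lambda>N. real N powr \<Lambda>)"
    using \<Lambda>_pos by (intro incseq_SucI powr_mono2) simp_all
  ultimately show ?thesis
    using g_pos by (intro tendsto_mult_decseq_incseq[OF _ g_decseq _ _ _ lower upper]) (simp_all add: less_imp_le)
qed

lemma g_ratio_along_powers:
  assumes "q \<ge> 1"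
  shows "(\<lambda>k. g (Suc k ^ q) / g (k ^ q)) \<longlonglongrightarrow> 1"
proof -
  define G where "G k = g (k ^ q) * real (k ^ q) powr \<Lambda>" for k
  have "filterlim (\<lambda>k. k ^ q) sequentially sequentially"
    using assms by (intro filterlim_subseq strict_mono_power)
  then have G: "G \<longlonglongrightarrow> \<kappa>"
    unfolding G_def using g_asymptotics by (rule filterlim_compose[where f = "\<lambda>k. k ^ q", rotated])
  have "(\<lambda>k. G (Suc k) / G k * ((real k / real (Suc k)) ^ q) powr \<Lambda>) \<longlonglongrightarrow> \<kappa> / \<kappa> * (1 ^ q) powr \<Lambda>"
    using \<kappa>_pos
    by (intro tendsto_mult tendsto_divide LIMSEQ_Suc[OF G] G tendsto_powr tendsto_power LIMSEQ_n_over_Suc_n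
        tendsto_const) simp_all
  then have "(\<lambda>k. G (Suc k) / G k * ((real k / real (Suc k)) ^ q) powr \<Lambda>) \<longlonglongrightarrow> 1"
    using \<kappa>_pos by simp
  moreover have "eventually (\<lambda>k. G (Suc k) / G k * ((real k / real (Suc k)) ^ q) powr \<Lambda>
      = g (Suc k ^ q) / g (k ^ q)) sequentially"
    using eventually_gt_at_top[of 0]
  proof eventually_elim
    case (elim k)
    have "((real k / real (Suc k)) ^ q) powr \<Lambda> = real (k ^ q) powr \<Lambda> / real (Suc k ^ q) powr \<Lambda>"
      by (simp add: power_divide powr_divide del: of_nat_Suc)
    then show ?case
      unfolding G_def using elim g_pos[of "k ^ q"] g_pos[of "Suc k ^ q"] by (simp add: field_simps)
  qed
  ultimately show ?thesis
    by (rule Lim_transform_eventually)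
qed

text \<open>Since g N is of order N powr -\<Lambda>, along N = k ^ q with q \<Lambda> \<ge> 4 it decays like k powr -4.\<close>
lemma summable_sqrt_g_along_powers:
  assumes "4 \<le> real q * \<Lambda>"
  shows "summable (\<lambda>k. sqrt (g (k ^ q)))"
proof -
  have "q \<ge> 1"
    using assms by (cases q) simp_all
  then have "filterlim (\<lambda>k. k ^ q) sequentially sequentially"
    by (intro filterlim_subseq strict_mono_power)
  moreover have "eventually (\<lambda>N. g N * real N powr \<Lambda> < 2 * \<kappa>) sequentially"
    using g_asymptotics \<kappa>_pos by (intro order_tendstoD(2)) auto
  ultimately have "eventually (\<lambda>k. g (k ^ q) * real (k ^ q) powr \<Lambda> < 2 * \<kappa>) sequentially"
    by (rule eventually_compose_filterlim[rotated])
  then have "eventually (\<lambda>k. norm (sqrt (g (k ^ q))) \<le> sqrt (2 * \<kappa>) * inverse (real k ^ 2)) sequentially"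
    using eventually_gt_at_top[of 0]
  proof eventually_elim
    case (elim k)
    have "real k ^ 4 = real k powr 4"
      using elim by (simp add: powr_realpow)
    also have "\<dots> \<le> real k powr (real q * \<Lambda>)"
      using assms elim by (intro powr_mono) auto
    also have "\<dots> = real (k ^ q) powr \<Lambda>"
      using elim by (simp add: powr_realpow[symmetric] powr_powr)
    finally have "g (k ^ q) * real k ^ 4 < 2 * \<kappa>"
      using elim g_pos[of "k ^ q"] by (meson mult_left_mono less_imp_le le_less_trans)
    then have "g (k ^ q) \<le> 2 * \<kappa> / real k ^ 4"
      using elim by (simp add: field_simps)
    then have "sqrt (g (k ^ q)) \<le> sqrt (2 * \<kappa> / real k ^ 4)"
      by simp
    also have "\<dots> = sqrt (2 * \<kappa>) * inverse (real k ^ 2)"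
    proof -
      have "sqrt (real k ^ 4) = real k ^ 2"
        by (rule real_sqrt_unique) simp_all
      then show ?thesis
        by (simp add: divide_inverse real_sqrt_mult real_sqrt_inverse)
    qed
    finally show ?case
      using g_pos[of "k ^ q"] by simp
  qed
  moreover have "summable (\<lambda>k. sqrt (2 * \<kappa>) * inverse (real k ^ 2))"
    by (intro summable_mult inverse_power_summable) simp
  ultimately show ?thesis
    by (rule summable_comparison_test_ev)
qed

end

section \<open>Moments of the white mass\<close>

locale urn = urn_params p \<sigma> l w0 b0 + prob_space M
  for p :: nat and \<sigma> l w0 b0 :: real and M :: "'a measure" +
  fixes X :: "nat \<Rightarrow> 'a \<Rightarrow> bool"
  assumes X_measurable: "\<And>n. X n \<in> measurable M (count_space UNIV)"
    and white_prob: "\<And>n. AE \<omega> in M.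
      real_cond_exp M (urnF M X n) (\<lambda>\<omega>. if X (Suc n) \<omega> then 1 else 0) \<omega>
        = urnW \<sigma> w0 X n \<omega> / urnT p \<sigma> l w0 b0 n"
begin

abbreviation W where "W n \<omega> \<equiv> urnW \<sigma> w0 X n \<omega>"
abbreviation F where "F n \<equiv> urnF M X n"
abbreviation white :: "nat \<Rightarrow> 'a \<Rightarrow> real" where "white n \<equiv> \<lambda>\<omega>. if X n \<omega> then 1 else 0"

lemma W_values: "W n \<omega> \<in> (\<lambda>k. w0 + real k * \<sigma>) ` {..n}"
proof (induction n)
  case (Suc n)
  then obtain k where k: "k \<le> n" "W n \<omega> = w0 + real k * \<sigma>"
    by blast
  show ?case
  proof (cases "X (Suc n) \<omega>")
    case True
    have "Suc k \<in> {..Suc n}"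
      using k by simp
    moreover have "W (Suc n) \<omega> = w0 + real (Suc k) * \<sigma>"
      using True k by (simp add: algebra_simps)
    ultimately show ?thesis
      by (rule rev_image_eqI)
  next
    case False
    then show ?thesis
      using k by auto
  qed
qed simp

lemma W_ge_w0: "W n \<omega> \<ge> w0"
  using W_values[of n \<omega>] \<sigma>_pos by auto

lemma W_incseq: "incseq (\<lambda>n. W n \<omega>)"
  using \<sigma>_pos by (intro incseq_SucI) simp

lemma sets_F: "sets (F N) = sigma_sets (space M) {{\<omega> \<in> space M. X i \<omega>} | i. 1 \<le> i \<and> i \<le> N}"
  unfolding urnF_def by (rule sets_measure_of) auto

lemma space_F: "space (F N) = space M"
  unfolding urnF_def by (rule space_measure_of) auto

lemma white_set_in_F: "1 \<le> i \<Longrightarrow> i \<le> N \<Longrightarrow> {\<omega> \<in> space M. X i \<omega>} \<in> sets (F N)"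
  unfolding sets_F by (rule sigma_sets.Basic) auto

lemma subalgebra_F: "subalgebra M (F N)"
proof -
  have "{\<omega> \<in> space M. X i \<omega>} \<in> sets M" for i
    using measurable_sets[OF X_measurable[of i], of "{True}"] by (simp add: vimage_def Int_def conj_commute)
  then have "sigma_sets (space M) {{\<omega> \<in> space M. X i \<omega>} | i. 1 \<le> i \<and> i \<le> N} \<subseteq> sets M"
    by (intro sets.sigma_sets_subset) auto
  then show ?thesis
    unfolding subalgebra_def by (simp add: sets_F space_F)
qed

text \<open>The extra argument \<omega> of h lets this cover functions of several W's as well.\<close>
lemma measurable_F_W_param:
  fixes h :: "real \<Rightarrow> 'a \<Rightarrow> real"
  assumes "n \<le> N" "\<And>x. h x \<in> borel_measurable (F N)"
  shows "(\<lambda>\<omega>. h (W n \<omega>) \<omega>) \<in> borel_measurable (F N)"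
  using assms
proof (induction n arbitrary: h)
  case (Suc n)
  have white_set: "{\<omega>. X (Suc n) \<omega>} \<inter> space (F N) \<in> sets (F N)"
    using white_set_in_F[of "Suc n" N] Suc.prems by (simp add: space_F Collect_conj_eq Int_commute)
  have "(\<lambda>\<omega>. h (W (Suc n) \<omega>) \<omega>)
      = (\<lambda>\<omega>. if \<omega> \<in> {\<omega>. X (Suc n) \<omega>} then h (W n \<omega> + \<sigma>) \<omega> else h (W n \<omega>) \<omega>)"
    by auto
  also have "\<dots> \<in> borel_measurable (F N)"
    using Suc.prems
    by (intro measurable_If_set[OF Suc.IH[of "\<lambda>x. h (x + \<sigma>)"] Suc.IH[of h] white_set]) auto
  finally show ?case .
qed simp

lemma measurable_F_fun_W:
  fixes h :: "real \<Rightarrow> real"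
  shows "n \<le> N \<Longrightarrow> (\<lambda>\<omega>. h (W n \<omega>)) \<in> borel_measurable (F N)"
  using measurable_F_W_param[of n N "\<lambda>x _. h x"] by simp

lemma measurable_F_to_M: "f \<in> borel_measurable (F N) \<Longrightarrow> f \<in> borel_measurable M"
  by (rule measurable_from_subalg[OF subalgebra_F])

lemma measurable_fun_W: "(\<lambda>\<omega>. h (W n \<omega>) :: real) \<in> borel_measurable M"
  by (rule measurable_F_to_M[OF measurable_F_fun_W[of n n]]) simp

lemma integrable_if_bounded: "f \<in> borel_measurable M \<Longrightarrow> (\<And>\<omega>. \<bar>f \<omega>\<bar> \<le> B) \<Longrightarrow> integrable M f"
  for f :: "'a \<Rightarrow> real"
  by (rule integrable_const_bound[where B = B]) auto

text \<open>W takes only finitely many values, so every function of two W's is bounded.\<close>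
lemma integrable_fun_W2: "integrable M (\<lambda>\<omega>. H (W a \<omega>) (W b \<omega>) :: real)"
proof (rule integrable_if_bounded)
  have "(\<lambda>\<omega>. H (W a \<omega>) (W b \<omega>)) \<in> borel_measurable (F (max a b))"
    by (rule measurable_F_W_param[where h = "\<lambda>x \<omega>. H x (W b \<omega>)"]) (simp_all add: measurable_F_fun_W)
  then show "(\<lambda>\<omega>. H (W a \<omega>) (W b \<omega>)) \<in> borel_measurable M"
    by (rule measurable_F_to_M)
  let ?V = "\<lambda>n. (\<lambda>k. w0 + real k * \<sigma>) ` {..n}"
  fix \<omega>
  have "\<bar>H (W a \<omega>) (W b \<omega>)\<bar> \<le> (\<Sum>y\<in>?V b. \<bar>H (W a \<omega>) y\<bar>)"
    using W_values[of b \<omega>] by (intro member_le_sum) auto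
  also have "\<dots> \<le> (\<Sum>x\<in>?V a. \<Sum>y\<in>?V b. \<bar>H x y\<bar>)"
    using W_values[of a \<omega>] by (intro member_le_sum[where f = "\<lambda>x. \<Sum>y\<in>?V b. \<bar>H x y\<bar>"]) (auto intro: sum_nonneg)
  finally show "\<bar>H (W a \<omega>) (W b \<omega>)\<bar> \<le> (\<Sum>x\<in>?V a. \<Sum>y\<in>?V b. \<bar>H x y\<bar>)" .
qed

lemma integrable_fun_W: "integrable M (\<lambda>\<omega>. h (W n \<omega>) :: real)"
  using integrable_fun_W2[of "\<lambda>x y. h x" n n] .

lemma white_measurable: "white n \<in> borel_measurable M"
  by (rule measurable_compose[OF X_measurable[of n], of "\<lambda>b. if b then 1 else 0"]) simp

lemma integrable_mult_white:
  assumes "f \<in> borel_measurable M" "\<And>\<omega>. \<bar>f \<omega>\<bar> \<le> B"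
  shows "integrable M (\<lambda>\<omega>. f \<omega> * white n \<omega>)"
proof (rule integrable_if_bounded)
  show "(\<lambda>\<omega>. f \<omega> * white n \<omega>) \<in> borel_measurable M"
    using assms(1) white_measurable by simp
  show "\<bar>f \<omega> * white n \<omega>\<bar> \<le> B" for \<omega>
    using assms(2)[of \<omega>] abs_ge_zero[of "f \<omega>"] by (auto simp: abs_mult)
qed

lemma integral_mult_white:
  assumes f: "f \<in> borel_measurable (F N)" and bound: "\<And>\<omega>. \<bar>f \<omega>\<bar> \<le> B"
  shows "(\<integral>\<omega>. f \<omega> * white (Suc N) \<omega> \<partial>M) = (\<integral>\<omega>. f \<omega> * (W N \<omega> / T N) \<partial>M)"
proof -
  interpret S: finite_measure_subalgebra M "F N"
    using subalgebra_F by unfold_locales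
  have fM: "f \<in> borel_measurable M"
    by (rule measurable_F_to_M[OF f])
  have "integrable M (\<lambda>\<omega>. f \<omega> * white (Suc N) \<omega>)"
    by (rule integrable_mult_white[OF fM bound])
  then have "(\<integral>\<omega>. f \<omega> * white (Suc N) \<omega> \<partial>M) = (\<integral>\<omega>. f \<omega> * real_cond_exp M (F N) (white (Suc N)) \<omega> \<partial>M)"
    by (rule S.real_cond_exp_intg(2)[symmetric, OF _ f white_measurable])
  also have "\<dots> = (\<integral>\<omega>. f \<omega> * (W N \<omega> / T N) \<partial>M)"
    using white_prob[of N] fM measurable_fun_W[of "\<lambda>x. x" N]
    by (intro integral_cong_AE) auto
  finally show ?thesis .
qed

lemma integral_mult_W_Suc:
  assumes f: "f \<in> borel_measurable (F N)" and bound: "\<And>\<omega>. \<bar>f \<omega>\<bar> \<le> B"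
  shows "(\<integral>\<omega>. f \<omega> * W (Suc N) \<omega> \<partial>M) = (T N + \<sigma>) / T N * (\<integral>\<omega>. f \<omega> * W N \<omega> \<partial>M)"
proof -
  have fM: "f \<in> borel_measurable M"
    by (rule measurable_F_to_M[OF f])
  have "integrable M (\<lambda>\<omega>. f \<omega> * W N \<omega>)"
  proof (rule integrable_if_bounded)
    show "(\<lambda>\<omega>. f \<omega> * W N \<omega>) \<in> borel_measurable M"
      using fM measurable_fun_W[of "\<lambda>x. x" N] by simp
    fix \<omega>
    have "\<bar>W N \<omega>\<bar> \<le> w0 + real N * \<sigma>"
      using W_values[of N \<omega>] w0_pos \<sigma>_pos by (auto intro: mult_right_mono)
    then show "\<bar>f \<omega> * W N \<omega>\<bar> \<le> B * (w0 + real N * \<sigma>)"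
      using bound[of \<omega>] by (simp add: abs_mult mult_mono' order_trans[OF abs_ge_zero bound])
  qed
  moreover have "integrable M (\<lambda>\<omega>. f \<omega> * white (Suc N) \<omega>)"
    by (rule integrable_mult_white[OF fM bound])
  moreover have "(\<lambda>\<omega>. f \<omega> * W (Suc N) \<omega>) = (\<lambda>\<omega>. f \<omega> * W N \<omega> + \<sigma> * (f \<omega> * white (Suc N) \<omega>))"
    by (auto simp: algebra_simps)
  ultimately have "(\<integral>\<omega>. f \<omega> * W (Suc N) \<omega> \<partial>M)
      = (\<integral>\<omega>. f \<omega> * W N \<omega> \<partial>M) + \<sigma> * (\<integral>\<omega>. f \<omega> * white (Suc N) \<omega> \<partial>M)"
    by simp
  also have "(\<integral>\<omega>. f \<omega> * white (Suc N) \<omega> \<partial>M) = (\<integral>\<omega>. f \<omega> * W N \<omega> \<partial>M) / T N"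
    unfolding integral_mult_white[OF f bound] by (simp add: mult.assoc[symmetric])
  finally show ?thesis
    using T_pos[of N] by (simp add: field_simps)
qed


lemma fun_W_bounded:
  obtains B where "\<And>\<omega>. \<bar>h (W n \<omega>) :: real\<bar> \<le> B"
proof
  fix \<omega>
  show "\<bar>h (W n \<omega>)\<bar> \<le> (\<Sum>x\<in>(\<lambda>k. w0 + real k * \<sigma>) ` {..n}. \<bar>h x\<bar>)"
    using W_values[of n \<omega>] by (intro member_le_sum) auto
qed

lemma expectation_pochhammer_W:
  "expectation (\<lambda>\<omega>. pochhammer (W N \<omega> / \<sigma>) s) = pochhammer (w0 / \<sigma>) s * (\<Prod>j<N. (T j + real s * \<sigma>) / T j)"
proof (induction N)
  case 0
  then show ?case
    by (simp add: prob_space)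
next
  case (Suc N)
  define D where "D \<omega> = pochhammer (W N \<omega> / \<sigma> + 1) s - pochhammer (W N \<omega> / \<sigma>) s" for \<omega>
  have D_measurable: "D \<in> borel_measurable (F N)"
    unfolding D_def by (rule measurable_F_fun_W[of N N "\<lambda>y. pochhammer (y / \<sigma> + 1) s - pochhammer (y / \<sigma>) s"]) simp
  obtain B where D_bound: "\<And>\<omega>. \<bar>D \<omega>\<bar> \<le> B"
    using fun_W_bounded[of "\<lambda>y. pochhammer (y / \<sigma> + 1) s - pochhammer (y / \<sigma>) s" N] unfolding D_def by blast
  have "pochhammer (W (Suc N) \<omega> / \<sigma>) s = pochhammer (W N \<omega> / \<sigma>) s + D \<omega> * white (Suc N) \<omega>" for \<omega>
    using \<sigma>_pos by (auto simp: D_def add_divide_distrib)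
  then have "expectation (\<lambda>\<omega>. pochhammer (W (Suc N) \<omega> / \<sigma>) s)
      = expectation (\<lambda>\<omega>. pochhammer (W N \<omega> / \<sigma>) s) + (\<integral>\<omega>. D \<omega> * white (Suc N) \<omega> \<partial>M)"
    using integrable_fun_W[of "\<lambda>y. pochhammer (y / \<sigma>) s" N]
      integrable_mult_white[OF measurable_F_to_M[OF D_measurable] D_bound]
    by simp
  also have "(\<integral>\<omega>. D \<omega> * white (Suc N) \<omega> \<partial>M) = (\<integral>\<omega>. D \<omega> * (W N \<omega> / T N) \<partial>M)"
    by (rule integral_mult_white[OF D_measurable D_bound])
  \<comment> \<open>x ((x+1)^(s) - x^(s)) = s x^(s) with x = W N / \<sigma>\<close>
  also have "\<dots> = (\<integral>\<omega>. real s * \<sigma> / T N * pochhammer (W N \<omega> / \<sigma>) s \<partial>M)"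
  proof (rule Bochner_Integration.integral_cong)
    fix \<omega>
    have "D \<omega> * (W N \<omega> / T N) = \<sigma> / T N * (W N \<omega> / \<sigma> * D \<omega>)"
      using \<sigma>_pos by (simp add: field_simps)
    then show "D \<omega> * (W N \<omega> / T N) = real s * \<sigma> / T N * pochhammer (W N \<omega> / \<sigma>) s"
      unfolding D_def pochhammer_Suc_diff by (simp add: ac_simps)
  qed simp
  finally show ?case
    using T_pos[of N] by (simp add: Suc field_simps)
qed

lemma expectation_fun_W:
  "expectation (\<lambda>\<omega>. h (W N \<omega>)) = (\<Sum>k\<le>N. h (w0 + real k * \<sigma>) * prob {\<omega> \<in> space M. W N \<omega> = w0 + real k * \<sigma>})"
proof -
  let ?v = "\<lambda>k. w0 + real k * \<sigma>"
  let ?E = "\<lambda>k. {\<omega> \<in> space M. W N \<omega> = ?v k}"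
  have E_sets: "?E k \<in> sets M" for k
  proof -
    have "?E k = (\<lambda>\<omega>. W N \<omega>) -` {?v k} \<inter> space M"
      by auto
    then show ?thesis
      using measurable_sets[OF measurable_fun_W[of "\<lambda>x. x" N]] by simp
  qed
  have "h (W N \<omega>) = (\<Sum>k\<le>N. h (?v k) * indicator (?E k) \<omega>)" if "\<omega> \<in> space M" for \<omega>
  proof -
    obtain k0 where k0: "k0 \<le> N" "W N \<omega> = ?v k0"
      using W_values by blast
    then have "\<omega> \<in> ?E k \<longleftrightarrow> k = k0" for k
      using that \<sigma>_pos by auto
    then show ?thesis
      using k0 by (simp add: indicator_def if_distrib[of "\<lambda>x. _ * x"] sum.delta)
  qed
  then have "expectation (\<lambda>\<omega>. h (W N \<omega>)) = expectation (\<lambda>\<omega>. \<Sum>k\<le>N. h (?v k) * indicator (?E k) \<omega>)"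
    by (intro Bochner_Integration.integral_cong) simp_all
  also have "\<dots> = (\<Sum>k\<le>N. expectation (\<lambda>\<omega>. h (?v k) * indicator (?E k) \<omega>))"
    by (rule Bochner_Integration.integral_sum) (simp add: E_sets emeasure_finite less_top[symmetric])
  also have "\<dots> = (\<Sum>k\<le>N. h (?v k) * prob (?E k))"
    by (simp add: Int_absorb2 E_sets sets.sets_into_space)
  finally show ?thesis .
qed

lemma expectation_powr_W_sums:
  assumes "\<bar>v - 1\<bar> < 1"
  shows "(\<lambda>s. (v - 1) ^ s / fact s *
      (\<Sum>r\<le>s. (-1) ^ (s - r) * lah s r * pochhammer (w0 / \<sigma>) r * (\<Prod>j<N. (T j + real r * \<sigma>) / T j)))
    sums expectation (\<lambda>\<omega>. v powr (W N \<omega> / \<sigma>))"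
proof -
  let ?v = "\<lambda>k. w0 + real k * \<sigma>"
  let ?q = "\<lambda>k. prob {\<omega> \<in> space M. W N \<omega> = ?v k}"
  \<comment> \<open>by (i), the s-th coefficient is the expectation of the binomial coefficient (W N / \<sigma> choose s)\<close>
  have coeff: "(v - 1) ^ s / fact s *
      (\<Sum>r\<le>s. (-1) ^ (s - r) * lah s r * pochhammer (w0 / \<sigma>) r * (\<Prod>j<N. (T j + real r * \<sigma>) / T j))
    = (\<Sum>k\<le>N. ?q k * ((?v k / \<sigma> gchoose s) * (v - 1) ^ s))" for s
  proof -
    have "(\<Sum>r\<le>s. (-1) ^ (s - r) * lah s r * pochhammer (w0 / \<sigma>) r * (\<Prod>j<N. (T j + real r * \<sigma>) / T j))
        = (\<Sum>r\<le>s. (-1) ^ (s - r) * lah s r * (\<Sum>k\<le>N. pochhammer (?v k / \<sigma>) r * ?q k))"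
      by (simp add: mult.assoc expectation_pochhammer_W[symmetric] expectation_fun_W[of "\<lambda>y. pochhammer (y / \<sigma>) _"])
    also have "\<dots> = (\<Sum>k\<le>N. ?q k * (\<Sum>r\<le>s. (-1) ^ (s - r) * lah s r * pochhammer (?v k / \<sigma>) r))"
      by (simp add: sum_distrib_left sum_distrib_right algebra_simps sum.swap[of _ "{..s}"])
    also have "\<dots> = (\<Sum>k\<le>N. ?q k * (fact s * (?v k / \<sigma> gchoose s)))"
      by (simp add: sum_lah_pochhammer_eq_gbinomial)
    finally show ?thesis
      by (simp add: sum_distrib_left algebra_simps)
  qed
  have "(\<lambda>s. \<Sum>k\<le>N. ?q k * ((?v k / \<sigma> gchoose s) * (v - 1) ^ s))
      sums (\<Sum>k\<le>N. ?q k * (1 + (v - 1)) powr (?v k / \<sigma>))"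
    using assms by (intro sums_sum sums_mult gen_binomial_real) simp
  also have "(\<Sum>k\<le>N. ?q k * (1 + (v - 1)) powr (?v k / \<sigma>)) = expectation (\<lambda>\<omega>. v powr (W N \<omega> / \<sigma>))"
    by (simp add: expectation_fun_W[of "\<lambda>y. v powr (y / \<sigma>)"] mult.commute)
  finally show ?thesis
    unfolding coeff .
qed


section \<open>The martingale\<close>

abbreviation mart where "mart N \<omega> \<equiv> g N * W N \<omega>"

lemma mart_nonneg: "mart N \<omega> \<ge> 0"
  using g_pos[of N] W_ge_w0[of N \<omega>] w0_pos by simp

lemma mart_measurable: "(\<lambda>\<omega>. mart N \<omega>) \<in> borel_measurable (F N)"
  using measurable_F_fun_W[of N N "\<lambda>y. g N * y"] by simp

lemma integrable_mart: "integrable M (\<lambda>\<omega>. mart N \<omega>)"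
  using integrable_fun_W[of "\<lambda>y. g N * y" N] .

lemma integral_mult_mart_Suc:
  assumes "f \<in> borel_measurable (F N)" "\<And>\<omega>. \<bar>f \<omega>\<bar> \<le> B"
  shows "(\<integral>\<omega>. f \<omega> * mart (Suc N) \<omega> \<partial>M) = (\<integral>\<omega>. f \<omega> * mart N \<omega> \<partial>M)"
proof -
  have "(\<integral>\<omega>. f \<omega> * mart (Suc N) \<omega> \<partial>M) = (\<integral>\<omega>. g (Suc N) * (f \<omega> * W (Suc N) \<omega>) \<partial>M)"
    by (rule Bochner_Integration.integral_cong) (simp_all add: ac_simps del: urnW.simps)
  also have "\<dots> = g (Suc N) * (\<integral>\<omega>. f \<omega> * W (Suc N) \<omega> \<partial>M)"
    by (rule integral_mult_right_zero)
  also have "\<dots> = g (Suc N) * ((T N + \<sigma>) / T N) * (\<integral>\<omega>. f \<omega> * W N \<omega> \<partial>M)"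
    unfolding integral_mult_W_Suc[OF assms] by (rule mult.assoc[symmetric])
  also have "\<dots> = g N * (\<integral>\<omega>. f \<omega> * W N \<omega> \<partial>M)"
    by (simp only: g_Suc_mult_inverse)
  also have "\<dots> = (\<integral>\<omega>. f \<omega> * mart N \<omega> \<partial>M)"
    by (simp add: integral_mult_right_zero[symmetric] ac_simps del: urnW.simps)
  finally show ?thesis .
qed

lemma cond_exp_mart: "AE \<omega> in M. real_cond_exp M (F N) (\<lambda>\<omega>. mart (Suc N) \<omega>) \<omega> = mart N \<omega>"
proof -
  interpret S: finite_measure_subalgebra M "F N"
    using subalgebra_F by unfold_locales
  show ?thesis
  proof (rule S.real_cond_exp_charact)
    fix A
    assume "A \<in> sets (F N)"
    then have "(\<integral>\<omega>. indicator A \<omega> * mart (Suc N) \<omega> \<partial>M) = (\<integral>\<omega>. indicator A \<omega> * mart N \<omega> \<partial>M)"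
      by (intro integral_mult_mart_Suc[where B = 1]) (simp_all add: indicator_def)
    then show "(\<integral>\<omega>\<in>A. mart (Suc N) \<omega> \<partial>M) = (\<integral>\<omega>\<in>A. mart N \<omega> \<partial>M)"
      by (simp only: set_lebesgue_integral_def real_scaleR_def)
  qed (rule integrable_mart, rule integrable_mart, rule mart_measurable)
qed

lemma integral_mart_mult_mart:
  "a \<le> b \<Longrightarrow> (\<integral>\<omega>. mart a \<omega> * mart b \<omega> \<partial>M) = (\<integral>\<omega>. mart a \<omega> * mart a \<omega> \<partial>M)"
proof (induction b rule: dec_induct)
  case (step b)
  obtain B where bound: "\<And>\<omega>. \<bar>mart a \<omega>\<bar> \<le> B"
    using fun_W_bounded[of "\<lambda>y. g a * y" a] by blast
  have "(\<lambda>\<omega>. mart a \<omega>) \<in> borel_measurable (F b)"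
    using measurable_F_fun_W[of a b "\<lambda>y. g a * y"] step by simp
  then show ?case
    using integral_mult_mart_Suc[OF _ bound] step.IH by simp
qed simp

definition mart_sq_factor :: "nat \<Rightarrow> real" where
  "mart_sq_factor N = g N ^ 2 * (\<Prod>j<N. (T j + 2 * \<sigma>) / T j)"

lemma mart_sq_factor_nonneg: "mart_sq_factor N \<ge> 0"
  unfolding mart_sq_factor_def using T_pos \<sigma>_pos
  by (intro mult_nonneg_nonneg prod_nonneg) (auto intro!: less_imp_le divide_pos_pos add_pos_pos)

lemma mart_sq_factor_decseq: "decseq mart_sq_factor"
proof (rule decseq_SucI)
  fix N
  have "(T N / (T N + \<sigma>))\<^sup>2 * ((T N + 2 * \<sigma>) / T N) = (T N)\<^sup>2 * (T N + 2 * \<sigma>) / ((T N + \<sigma>)\<^sup>2 * T N)"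
    by (simp add: power_divide)
  also have "\<dots> \<le> 1"
  proof -
    have "(T N + \<sigma>)\<^sup>2 * T N - (T N)\<^sup>2 * (T N + 2 * \<sigma>) = \<sigma>\<^sup>2 * T N"
      by (simp add: power2_eq_square algebra_simps)
    moreover have "\<sigma>\<^sup>2 * T N \<ge> 0" "(T N + \<sigma>)\<^sup>2 * T N > 0"
      using T_pos[of N] \<sigma>_pos by (simp_all add: add_pos_pos)
    ultimately show ?thesis
      by (simp add: pos_divide_le_eq)
  qed
  finally have "mart_sq_factor N * ((T N / (T N + \<sigma>))\<^sup>2 * ((T N + 2 * \<sigma>) / T N)) \<le> mart_sq_factor N * 1"
    using mart_sq_factor_nonneg[of N] by (intro mult_left_mono)
  then show "mart_sq_factor (Suc N) \<le> mart_sq_factor N"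
    by (simp only: mart_sq_factor_def g_Suc prod.lessThan_Suc power_mult_distrib mult_ac)
qed

text \<open>The second moment, from (i) with s = 1 and s = 2.\<close>
lemma expectation_mart_sq:
  "(\<integral>\<omega>. mart N \<omega> * mart N \<omega> \<partial>M) = \<sigma> * w0 * ((w0 / \<sigma> + 1) * mart_sq_factor N - g N)"
proof -
  have "mart N \<omega> * mart N \<omega>
      = (g N)\<^sup>2 * \<sigma>\<^sup>2 * (pochhammer (W N \<omega> / \<sigma>) 2 - pochhammer (W N \<omega> / \<sigma>) 1)" for \<omega>
    using \<sigma>_pos by (simp add: pochhammer_Suc numeral_eq_Suc power2_eq_square field_simps)
  then have "(\<integral>\<omega>. mart N \<omega> * mart N \<omega> \<partial>M)
      = (g N)\<^sup>2 * \<sigma>\<^sup>2 * (expectation (\<lambda>\<omega>. pochhammer (W N \<omega> / \<sigma>) 2) - expectation (\<lambda>\<omega>. pochhammer (W N \<omega> / \<sigma>) 1))"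
    using integrable_fun_W[of "\<lambda>y. pochhammer (y / \<sigma>) 2" N] integrable_fun_W[of "\<lambda>y. pochhammer (y / \<sigma>) 1" N]
    by (simp del: urnW.simps)
  also have "\<dots> = (g N)\<^sup>2 * \<sigma>\<^sup>2 * (w0 / \<sigma> * (w0 / \<sigma> + 1) * (\<Prod>j<N. (T j + 2 * \<sigma>) / T j)
      - w0 / \<sigma> * (\<Prod>j<N. (T j + \<sigma>) / T j))"
    unfolding expectation_pochhammer_W by (simp add: pochhammer_Suc numeral_eq_Suc)
  also have "\<dots> = \<sigma> * w0 * ((w0 / \<sigma> + 1) * mart_sq_factor N - g N * (g N * (\<Prod>j<N. (T j + \<sigma>) / T j)))"
    using \<sigma>_pos unfolding mart_sq_factor_def by (simp add: power2_eq_square field_simps)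
  finally show ?thesis
    by (simp add: g_mult_prod_inverse)
qed

lemma expectation_sq_mart_diff_le:
  assumes "a \<le> b"
  shows "expectation (\<lambda>\<omega>. (mart b \<omega> - mart a \<omega>)\<^sup>2) \<le> \<sigma> * w0 * g a"
proof -
  have "expectation (\<lambda>\<omega>. (mart b \<omega> - mart a \<omega>)\<^sup>2)
      = expectation (\<lambda>\<omega>. mart b \<omega> * mart b \<omega> - 2 * (mart a \<omega> * mart b \<omega>) + mart a \<omega> * mart a \<omega>)"
    by (simp add: power2_eq_square algebra_simps del: urnW.simps)
  also have "\<dots> = (\<integral>\<omega>. mart b \<omega> * mart b \<omega> \<partial>M) - 2 * (\<integral>\<omega>. mart a \<omega> * mart b \<omega> \<partial>M)
      + (\<integral>\<omega>. mart a \<omega> * mart a \<omega> \<partial>M)"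
    using integrable_fun_W2[of "\<lambda>x y. g b * y * (g b * y)" a b] integrable_fun_W2[of "\<lambda>x y. g a * x * (g b * y)" a b]
      integrable_fun_W2[of "\<lambda>x y. g a * x * (g a * x)" a b]
    by (simp del: urnW.simps)
  also have "\<dots> = \<sigma> * w0 * ((w0 / \<sigma> + 1) * (mart_sq_factor b - mart_sq_factor a) + (g a - g b))"
    unfolding integral_mart_mult_mart[OF assms] expectation_mart_sq by (simp add: algebra_simps)
  also have "\<dots> \<le> \<sigma> * w0 * g a"
  proof -
    have "(w0 / \<sigma> + 1) * (mart_sq_factor b - mart_sq_factor a) \<le> 0"
      using decseqD[OF mart_sq_factor_decseq assms] \<sigma>_pos w0_pos by (intro mult_nonneg_nonpos) auto
    then show ?thesis
      using g_pos[of b] \<sigma>_pos w0_pos by (intro mult_left_mono) auto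
  qed
  finally show ?thesis .
qed

lemma expectation_abs_mart_diff_le:
  assumes "a \<le> b"
  shows "expectation (\<lambda>\<omega>. \<bar>mart b \<omega> - mart a \<omega>\<bar>) \<le> sqrt (\<sigma> * w0 * g a)"
proof -
  have "expectation (\<lambda>\<omega>. \<bar>mart b \<omega> - mart a \<omega>\<bar>) \<le> sqrt (expectation (\<lambda>\<omega>. (mart b \<omega> - mart a \<omega>)\<^sup>2))"
    using integrable_fun_W2[of "\<lambda>x y. g b * y - g a * x" a b] integrable_fun_W2[of "\<lambda>x y. (g b * y - g a * x)\<^sup>2" a b]
    by (intro expectation_abs_le_sqrt) simp_all
  also have "\<dots> \<le> sqrt (\<sigma> * w0 * g a)"
    using expectation_sq_mart_diff_le[OF assms] by simp
  finally show ?thesis .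
qed


lemma AE_summable_mart_diff_along_powers:
  assumes "4 \<le> real q * \<Lambda>"
  shows "AE \<omega> in M. summable (\<lambda>k. \<bar>mart (Suc k ^ q) \<omega> - mart (k ^ q) \<omega>\<bar>)"
proof (rule AE_summable_if_summable_integral)
  show "integrable M (\<lambda>\<omega>. \<bar>mart (Suc k ^ q) \<omega> - mart (k ^ q) \<omega>\<bar>)" for k
    using integrable_fun_W2[of "\<lambda>x y. \<bar>g (Suc k ^ q) * y - g (k ^ q) * x\<bar>" "k ^ q" "Suc k ^ q"] by simp
  have "k ^ q \<le> Suc k ^ q" for k
    by (simp add: power_mono)
  then have bound: "norm (expectation (\<lambda>\<omega>. \<bar>mart (Suc k ^ q) \<omega> - mart (k ^ q) \<omega>\<bar>))
      \<le> sqrt (\<sigma> * w0) * sqrt (g (k ^ q))" for k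
    using expectation_abs_mart_diff_le integral_nonneg_AE[of "\<lambda>\<omega>. \<bar>mart (Suc k ^ q) \<omega> - mart (k ^ q) \<omega>\<bar>"]
    by (simp add: real_sqrt_mult del: urnW.simps)
  have "summable (\<lambda>k. sqrt (\<sigma> * w0) * sqrt (g (k ^ q)))"
    by (intro summable_mult summable_sqrt_g_along_powers assms)
  then show "summable (\<lambda>k. expectation (\<lambda>\<omega>. \<bar>mart (Suc k ^ q) \<omega> - mart (k ^ q) \<omega>\<bar>))"
    by (rule summable_comparison_test[rotated]) (use bound in blast)
qed simp

text \<open>Between N = k ^ q and N = (k + 1) ^ q the martingale is squeezed, since g decreases and
  W increases; the squeeze closes because g ((k + 1) ^ q) / g (k ^ q) \<longrightarrow> 1.\<close>
lemma mart_tendsto_if_tendsto_along_powers: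
  assumes "q \<ge> 1" and lim: "(\<lambda>k. mart (k ^ q) \<omega>) \<longlonglongrightarrow> L"
  shows "(\<lambda>N. mart N \<omega>) \<longlonglongrightarrow> L"
proof (rule tendsto_mult_decseq_incseq)
  define r where "r k = g (Suc k ^ q) / g (k ^ q)" for k
  have r: "r \<longlonglongrightarrow> 1"
    unfolding r_def by (rule g_ratio_along_powers[OF assms(1)])
  show "strict_mono (\<lambda>k::nat. k ^ q)"
    using assms(1) by (rule strict_mono_power)
  show "decseq g" "incseq (\<lambda>N. W N \<omega>)" "0 \<le> g N" "0 \<le> W N \<omega>" for N
    using g_decseq W_incseq g_pos[of N] W_ge_w0[of N \<omega>] w0_pos by simp_all
  have "(\<lambda>k. r k * mart (k ^ q) \<omega>) \<longlonglongrightarrow> 1 * L"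
    using r lim by (rule tendsto_mult)
  moreover have "r k * mart (k ^ q) \<omega> = g (Suc k ^ q) * W (k ^ q) \<omega>" for k
    unfolding r_def using g_pos[of "k ^ q"] by simp
  ultimately show "(\<lambda>k. g (Suc k ^ q) * W (k ^ q) \<omega>) \<longlonglongrightarrow> L"
    by simp
  have "(\<lambda>k. mart (Suc k ^ q) \<omega> / r k) \<longlonglongrightarrow> L / 1"
    using LIMSEQ_Suc[OF lim] r by (rule tendsto_divide) simp
  moreover have "mart (Suc k ^ q) \<omega> / r k = g (k ^ q) * W (Suc k ^ q) \<omega>" for k
    unfolding r_def using g_pos[of "Suc k ^ q"] by simp
  ultimately show "(\<lambda>k. g (k ^ q) * W (Suc k ^ q) \<omega>) \<longlonglongrightarrow> L"
    by simp
qed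

lemma mart_AE_tendsto:
  "\<exists>Minf. Minf \<in> borel_measurable M \<and> (AE \<omega> in M. (\<lambda>N. mart N \<omega>) \<longlonglongrightarrow> Minf \<omega>)
     \<and> (AE \<omega> in M. (\<lambda>N. W N \<omega> / real N powr \<Lambda>) \<longlonglongrightarrow> Minf \<omega> / \<kappa>)"
proof -
  obtain q :: nat where q: "4 / \<Lambda> < real q"
    using reals_Archimedean2 by blast
  then have "4 \<le> real q * \<Lambda>"
    using \<Lambda>_pos by (simp add: field_simps)
  then have "q \<ge> 1"
    by (cases q) simp_all
  define Minf where "Minf \<omega> = lim (\<lambda>k. mart (k ^ q) \<omega>)" for \<omega>
  have "Minf \<in> borel_measurable M"
    unfolding Minf_def using measurable_fun_W by measurable
  moreover have mart_lim: "AE \<omega> in M. (\<lambda>N. mart N \<omega>) \<longlonglongrightarrow> Minf \<omega>"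
    using AE_summable_mart_diff_along_powers[OF \<open>4 \<le> real q * \<Lambda>\<close>]
  proof eventually_elim
    case (elim \<omega>)
    then have "(\<lambda>k. mart (k ^ q) \<omega>) \<longlonglongrightarrow> Minf \<omega>"
      unfolding Minf_def by (intro convergent_LIMSEQ_iff[THEN iffD1] convergent_if_summable_abs_diff) simp
    then show ?case
      by (rule mart_tendsto_if_tendsto_along_powers[OF \<open>q \<ge> 1\<close>])
  qed
  moreover have "AE \<omega> in M. (\<lambda>N. W N \<omega> / real N powr \<Lambda>) \<longlonglongrightarrow> Minf \<omega> / \<kappa>"
    using mart_lim
  proof eventually_elim
    case (elim \<omega>)
    have "(\<lambda>N. mart N \<omega> / (g N * real N powr \<Lambda>)) \<longlonglongrightarrow> Minf \<omega> / \<kappa>"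
      using elim g_asymptotics \<kappa>_pos by (intro tendsto_divide) simp_all
    moreover have "mart N \<omega> / (g N * real N powr \<Lambda>) = W N \<omega> / real N powr \<Lambda>" for N
      using g_pos[of N] by simp
    ultimately show ?case
      by simp
  qed
  ultimately show ?thesis
    by blast
qed

end

theorem theorem1:
  fixes M :: "'a measure" and X :: "nat \<Rightarrow> 'a \<Rightarrow> bool"
    and p :: nat and \<sigma> l w0 b0 :: real
  assumes "prob_space M"
    and "p \<ge> 1" and "\<sigma> > 0" and "l > 0" and "w0 > 0" and "b0 \<ge> 0"
    and "\<And>n. X n \<in> measurable M (count_space UNIV)"
    and "\<And>n. AE \<omega> in M.
           real_cond_exp M (urnF M X n) (\<lambda>\<omega>. if X (Suc n) \<omega> then 1 else 0) \<omega>
             = urnW \<sigma> w0 X n \<omega> / urnT p \<sigma> l w0 b0 n"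
  shows
    "(\<forall>N s. prob_space.expectation M (\<lambda>\<omega>. pochhammer (urnW \<sigma> w0 X N \<omega> / \<sigma>) s)
        = pochhammer (w0 / \<sigma>) s *
          (\<Prod>j<N. (urnT p \<sigma> l w0 b0 j + real s * \<sigma>) / urnT p \<sigma> l w0 b0 j))
   \<and> (\<forall>N (v::real). \<bar>v - 1\<bar> < 1 \<longrightarrow>
        (\<lambda>s. (v - 1) ^ s / fact s *
              (\<Sum>r\<le>s. (-1) ^ (s - r) * lah s r * pochhammer (w0 / \<sigma>) r *
                 (\<Prod>j<N. (urnT p \<sigma> l w0 b0 j + real r * \<sigma>) / urnT p \<sigma> l w0 b0 j)))
        sums prob_space.expectation M (\<lambda>\<omega>. v powr (urnW \<sigma> w0 X N \<omega> / \<sigma>)))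
   \<and> (\<lambda>N. urn_g p \<sigma> l w0 b0 N * real N powr urn_Lambda p \<sigma> l)
        \<longlonglongrightarrow> urn_kappa p \<sigma> l w0 b0
   \<and> (\<forall>N. \<forall>\<omega>\<in>space M. urn_g p \<sigma> l w0 b0 N * urnW \<sigma> w0 X N \<omega> \<ge> 0)
   \<and> (\<forall>N. (\<lambda>\<omega>. urn_g p \<sigma> l w0 b0 N * urnW \<sigma> w0 X N \<omega>) \<in> borel_measurable (urnF M X N))
   \<and> (\<forall>N. integrable M (\<lambda>\<omega>. urn_g p \<sigma> l w0 b0 N * urnW \<sigma> w0 X N \<omega>))
   \<and> (\<forall>N. AE \<omega> in M.
        real_cond_exp M (urnF M X N)
          (\<lambda>\<omega>. urn_g p \<sigma> l w0 b0 (Suc N) * urnW \<sigma> w0 X (Suc N) \<omega>) \<omega>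
        = urn_g p \<sigma> l w0 b0 N * urnW \<sigma> w0 X N \<omega>)
   \<and> (\<exists>Minf. Minf \<in> borel_measurable M
        \<and> (AE \<omega> in M. (\<lambda>N. urn_g p \<sigma> l w0 b0 N * urnW \<sigma> w0 X N \<omega>) \<longlonglongrightarrow> Minf \<omega>)
        \<and> (AE \<omega> in M. (\<lambda>N. urnW \<sigma> w0 X N \<omega> / real N powr urn_Lambda p \<sigma> l)
                         \<longlonglongrightarrow> Minf \<omega> / urn_kappa p \<sigma> l w0 b0))"
proof -
  interpret urn p \<sigma> l w0 b0 M X
    using assms by (intro urn.intro urn_params.intro urn_axioms.intro) simp_all
  show ?thesis
    by (intro conjI allI impI ballI expectation_pochhammer_W expectation_powr_W_sums g_asymptotics
        mart_nonneg mart_measurable integrable_mart cond_exp_mart mart_AE_tendsto)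
qed

end
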